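(* Let $G$ be a connected graph of order $n$ with maximum degree $\Delta$, and let $k\ge\chi(G)$ be an integer. Then $\mathrm{sn}(G,k)=n$ if and only if $k>\Delta+1$. Also, $\underline{\mathrm{lcs}}(G,k)=n$ if and only if $k>\Delta+1$.
   Context: All graphs are finite and simple. For a graph $G=(V,E)$ and an integer $k\ge\chi(G)$, a proper $k$-colouring is a map $c:V\to[k]$ with $c(u)\neq c(v)$ for every edge $uv$. A set $S\subseteq V$ is a determining set for $(G,c)$ if there is no proper $k$-colouring $c'\neq c$ of $G$ with $c'(s)=c(s)$ for all $s\in S$. A critical set for $(G,c)$ is an inclusion-minimal determining set. $\mathrm{scs}(G,c)$ and $\mathrm{lcs}(G,c)$ are the sizes of a smallest resp. largest critical set for $(G,c)$. $\mathrm{sn}(G,k)$ is the minimum of $\mathrm{scs}(G,c)$ over all proper $k$-colourings $c$ (equivalently the minimum number of vertices coloured in a partial colouring having a unique extension to a proper $k$-colouring), and $\underline{\mathrm{lcs}}(G,k)$ is the minimum of $\mathrm{lcs}(G,c)$ over all proper $k$-colourings $c$. *)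

theory Defs
  imports Main
begin

definition simple_graph :: "'a set \<Rightarrow> ('a \<Rightarrow> 'a \<Rightarrow> bool) \<Rightarrow> bool" where
  "simple_graph V E \<longleftrightarrow> finite V \<and> (\<forall>u v. E u v \<longrightarrow> u \<in> V \<and> v \<in> V)
     \<and> (\<forall>u v. E u v \<longrightarrow> E v u) \<and> (\<forall>v. \<not> E v v)"

definition connected_graph :: "'a set \<Rightarrow> ('a \<Rightarrow> 'a \<Rightarrow> bool) \<Rightarrow> bool" where
  "connected_graph V E \<longleftrightarrow> V \<noteq> {} \<and> (\<forall>u\<in>V. \<forall>v\<in>V. E\<^sup>*\<^sup>* u v)"

definition degree :: "'a set \<Rightarrow> ('a \<Rightarrow> 'a \<Rightarrow> bool) \<Rightarrow> 'a \<Rightarrow> nat" where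
  "degree V E v = card {u\<in>V. E v u}"

definition max_degree :: "'a set \<Rightarrow> ('a \<Rightarrow> 'a \<Rightarrow> bool) \<Rightarrow> nat" where
  "max_degree V E = Max (degree V E ` V)"

definition proper_colouring :: "'a set \<Rightarrow> ('a \<Rightarrow> 'a \<Rightarrow> bool) \<Rightarrow> nat \<Rightarrow> ('a \<Rightarrow> nat) \<Rightarrow> bool" where
  "proper_colouring V E k c \<longleftrightarrow> (\<forall>v\<in>V. c v \<in> {1..k}) \<and> (\<forall>u v. E u v \<longrightarrow> c u \<noteq> c v)"

definition chromatic_number :: "'a set \<Rightarrow> ('a \<Rightarrow> 'a \<Rightarrow> bool) \<Rightarrow> nat" where
  "chromatic_number V E = (LEAST k. \<exists>c. proper_colouring V E k c)"

text \<open>Two colourings are different iff they differ at some vertex of V.\<close>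
definition determining_set :: "'a set \<Rightarrow> ('a \<Rightarrow> 'a \<Rightarrow> bool) \<Rightarrow> nat \<Rightarrow> ('a \<Rightarrow> nat) \<Rightarrow> 'a set \<Rightarrow> bool" where
  "determining_set V E k c S \<longleftrightarrow> S \<subseteq> V \<and>
     \<not> (\<exists>c'. proper_colouring V E k c' \<and> (\<exists>v\<in>V. c' v \<noteq> c v) \<and> (\<forall>s\<in>S. c' s = c s))"

definition critical_set :: "'a set \<Rightarrow> ('a \<Rightarrow> 'a \<Rightarrow> bool) \<Rightarrow> nat \<Rightarrow> ('a \<Rightarrow> nat) \<Rightarrow> 'a set \<Rightarrow> bool" where
  "critical_set V E k c S \<longleftrightarrow> determining_set V E k c S \<and>
     (\<forall>T. T \<subset> S \<longrightarrow> \<not> determining_set V E k c T)"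

definition scs :: "'a set \<Rightarrow> ('a \<Rightarrow> 'a \<Rightarrow> bool) \<Rightarrow> nat \<Rightarrow> ('a \<Rightarrow> nat) \<Rightarrow> nat" where
  "scs V E k c = Min {card S | S. critical_set V E k c S}"

definition lcs :: "'a set \<Rightarrow> ('a \<Rightarrow> 'a \<Rightarrow> bool) \<Rightarrow> nat \<Rightarrow> ('a \<Rightarrow> nat) \<Rightarrow> nat" where
  "lcs V E k c = Max {card S | S. critical_set V E k c S}"

definition sn :: "'a set \<Rightarrow> ('a \<Rightarrow> 'a \<Rightarrow> bool) \<Rightarrow> nat \<Rightarrow> nat" where
  "sn V E k = Min {scs V E k c | c. proper_colouring V E k c}"

definition lcs_lower :: "'a set \<Rightarrow> ('a \<Rightarrow> 'a \<Rightarrow> bool) \<Rightarrow> nat \<Rightarrow> nat" where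
  "lcs_lower V E k = Min {lcs V E k c | c. proper_colouring V E k c}"

end

theory Submission
  imports Defs
begin

(* If k > \<Delta> + 1, every vertex v can be recoloured, since its closed neighbourhood
   sees at most \<Delta> + 1 colours; hence V is the only determining set, and every
   critical set is V. If k \<le> \<Delta> + 1, take a vertex v of maximum degree and a
   k-colouring c maximising the number of colours on the neighbourhood of v. If no
   vertex were forced (all other colours on its neighbourhood), there would be a
   colour a missing around v, the class of a could be recoloured away, and a
   repeated colour among the at least k - 1 neighbours of v could be replaced by a,
   contradicting maximality. A forced vertex u makes V - {u} determining, so every
   critical set of that colouring has fewer than n vertices. *)

definition neighbours :: "'a set \<Rightarrow> ('a \<Rightarrow> 'a \<Rightarrow> bool) \<Rightarrow> 'a \<Rightarrow> 'a set" where
  "neighbours V E v = {u\<in>V. E v u}"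

definition forced_vertex :: "'a set \<Rightarrow> ('a \<Rightarrow> 'a \<Rightarrow> bool) \<Rightarrow> nat \<Rightarrow> ('a \<Rightarrow> nat) \<Rightarrow> 'a \<Rightarrow> bool" where
  "forced_vertex V E k c u \<longleftrightarrow> u \<in> V \<and> {1..k} - {c u} \<subseteq> c ` neighbours V E u"

lemma degree_eq_card_neighbours: "degree V E v = card (neighbours V E v)"
  by (simp add: degree_def neighbours_def)

lemma finite_neighbours: "finite V \<Longrightarrow> finite (neighbours V E v)"
  by (simp add: neighbours_def)

lemma simple_graph_edgeD:
  assumes "simple_graph V E" and "E u v"
  shows "u \<in> V" and "v \<in> V" and "u \<noteq> v" and "E v u"
  using assms unfolding simple_graph_def by metis+

lemma proper_colouring_in_colours:
  "proper_colouring V E k c \<Longrightarrow> v \<in> V \<Longrightarrow> c v \<in> {1..k}"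
  by (simp add: proper_colouring_def)

lemma proper_colouring_edge:
  "proper_colouring V E k c \<Longrightarrow> E u v \<Longrightarrow> c u \<noteq> c v"
  by (simp add: proper_colouring_def)

lemma proper_colouring_mono:
  "proper_colouring V E k c \<Longrightarrow> k \<le> k' \<Longrightarrow> proper_colouring V E k' c"
  by (auto simp: proper_colouring_def)

lemma exists_proper_colouring_card:
  assumes "simple_graph V E"
  shows "\<exists>c. proper_colouring V E (card V) c"
proof -
  have "finite V" using assms by (simp add: simple_graph_def)
  then obtain f where f: "bij_betw f V {0..<card V}"
    using ex_bij_betw_finite_nat by blast
  have "proper_colouring V E (card V) (\<lambda>x. f x + 1)"
    unfolding proper_colouring_def
  proof (intro conjI ballI allI impI)
    fix v assume "v \<in> V"
    then have "f v < card V" using f by (auto dest: bij_betwE)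
    then show "f v + 1 \<in> {1..card V}" by simp
  next
    fix u v assume "E u v"
    then have "u \<in> V" "v \<in> V" "u \<noteq> v" using simple_graph_edgeD[OF assms] by blast+
    then show "f u + 1 \<noteq> f v + 1" using f by (auto simp: bij_betw_def inj_on_def)
  qed
  then show ?thesis by blast
qed

lemma exists_proper_colouring:
  assumes "simple_graph V E" and "chromatic_number V E \<le> k"
  shows "\<exists>c. proper_colouring V E k c"
proof -
  have "\<exists>k c. proper_colouring V E k c"
    using exists_proper_colouring_card[OF assms(1)] by blast
  then have "\<exists>c. proper_colouring V E (chromatic_number V E) c"
    unfolding chromatic_number_def by (rule LeastI_ex)
  then show ?thesis using assms(2) proper_colouring_mono by blast
qed

lemma proper_colouring_fun_upd:
  assumes "simple_graph V E" and c: "proper_colouring V E k c"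
    and a: "a \<in> {1..k}" "a \<notin> c ` neighbours V E v"
  shows "proper_colouring V E k (c(v := a))"
  unfolding proper_colouring_def
proof (intro conjI ballI allI impI)
  fix x assume "x \<in> V"
  then show "(c(v := a)) x \<in> {1..k}" using a c by (simp add: proper_colouring_def)
next
  fix x y assume "E x y"
  then have "x \<in> V" "y \<in> V" "x \<noteq> y" "E y x" "c x \<noteq> c y"
    using simple_graph_edgeD[OF assms(1)] proper_colouring_edge[OF c] by blast+
  then show "(c(v := a)) x \<noteq> (c(v := a)) y"
    using a(2) \<open>E x y\<close> by (auto simp: neighbours_def)
qed

lemma determining_set_vertices: "determining_set V E k c V"
  unfolding determining_set_def by auto

lemma exists_critical_set:
  assumes "finite V"
  shows "\<exists>S. critical_set V E k c S"
proof -
  have "\<exists>S. determining_set V E k c S" using determining_set_vertices by blast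
  then obtain S where S: "determining_set V E k c S"
    and least: "\<And>T. determining_set V E k c T \<Longrightarrow> card S \<le> card T"
    using ex_has_least_nat[of "determining_set V E k c" _ card] by blast
  have "finite S" using S assms finite_subset unfolding determining_set_def by blast
  then have "\<not> determining_set V E k c T" if "T \<subset> S" for T
    using least[of T] psubset_card_mono[OF _ that] by linarith
  with S show ?thesis unfolding critical_set_def by blast
qed

lemma critical_set_subset: "critical_set V E k c S \<Longrightarrow> S \<subseteq> V"
  by (simp add: critical_set_def determining_set_def)

lemma card_critical_sets:
  assumes "finite V"
  shows "finite {card S | S. critical_set V E k c S}"
    and "{card S | S. critical_set V E k c S} \<noteq> {}"
proof -
  have "{card S | S. critical_set V E k c S} \<subseteq> {..card V}"
    using assms by (auto dest: critical_set_subset intro: card_mono)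
  then show "finite {card S | S. critical_set V E k c S}" by (rule finite_subset) simp
  show "{card S | S. critical_set V E k c S} \<noteq> {}"
    using exists_critical_set[OF assms] by blast
qed

lemma scs_le_lcs:
  assumes "finite V"
  shows "scs V E k c \<le> lcs V E k c"
  unfolding scs_def lcs_def using card_critical_sets[OF assms] by (intro Min_le Max_in)

lemma lcs_attained:
  assumes "finite V"
  obtains S where "critical_set V E k c S" and "lcs V E k c = card S"
proof -
  have "lcs V E k c \<in> {card S | S. critical_set V E k c S}"
    unfolding lcs_def using card_critical_sets[OF assms] by (rule Max_in)
  then show ?thesis using that by blast
qed

lemma lcs_le_card:
  assumes "finite V"
  shows "lcs V E k c \<le> card V"
proof -
  obtain S where "critical_set V E k c S" and "lcs V E k c = card S"
    using lcs_attained[OF assms] .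
  then show ?thesis using card_mono[OF assms critical_set_subset] by simp
qed

lemma sn_le_scs:
  assumes "finite V" and "proper_colouring V E k c"
  shows "sn V E k \<le> scs V E k c"
proof -
  have "{scs V E k c | c. proper_colouring V E k c} \<subseteq> {..card V}"
    by (auto intro: order_trans[OF scs_le_lcs[OF assms(1)] lcs_le_card[OF assms(1)]])
  then have "finite {scs V E k c | c. proper_colouring V E k c}" by (rule finite_subset) simp
  then show ?thesis unfolding sn_def using assms(2) by (intro Min_le) auto
qed

lemma lcs_lower_le_lcs:
  assumes "finite V" and "proper_colouring V E k c"
  shows "lcs_lower V E k \<le> lcs V E k c"
proof -
  have "{lcs V E k c | c. proper_colouring V E k c} \<subseteq> {..card V}"
    using lcs_le_card[OF assms(1)] by auto
  then have "finite {lcs V E k c | c. proper_colouring V E k c}" by (rule finite_subset) simp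
  then show ?thesis unfolding lcs_lower_def using assms(2) by (intro Min_le) auto
qed

lemma determining_set_eq_vertices:
  assumes sg: "simple_graph V E" and large: "max_degree V E + 1 < k"
    and c: "proper_colouring V E k c" and S: "determining_set V E k c S"
  shows "S = V"
proof (rule ccontr)
  assume "S \<noteq> V"
  with S obtain v where v: "v \<in> V" "v \<notin> S" unfolding determining_set_def by blast
  have fin: "finite V" using sg by (simp add: simple_graph_def)
  let ?seen = "insert (c v) (c ` neighbours V E v)"
  have "card ?seen \<le> card (c ` neighbours V E v) + 1"
    by (simp add: card_insert_if finite_neighbours[OF fin])
  also have "\<dots> \<le> card (neighbours V E v) + 1"
    using card_image_le[OF finite_neighbours[OF fin]] by simp
  also have "\<dots> \<le> max_degree V E + 1"
    using fin v by (simp add: max_degree_def degree_eq_card_neighbours[symmetric])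
  finally have "card ?seen < card {1..k}" using large by simp
  then have "\<not> {1..k} \<subseteq> ?seen"
    using card_mono[of ?seen "{1..k}"] finite_neighbours[OF fin] by auto
  then obtain a where a: "a \<in> {1..k}" "a \<notin> ?seen" by blast
  have "proper_colouring V E k (c(v := a))"
    using proper_colouring_fun_upd[OF sg c] a by simp
  moreover have "(c(v := a)) v \<noteq> c v" and "\<forall>s\<in>S. (c(v := a)) s = c s"
    using a v by auto
  ultimately show False using S v unfolding determining_set_def by blast
qed

lemma critical_set_iff_eq_vertices:
  assumes "simple_graph V E" and "max_degree V E + 1 < k" and "proper_colouring V E k c"
  shows "critical_set V E k c S \<longleftrightarrow> S = V"
  unfolding critical_set_def
  using determining_set_eq_vertices[OF assms] determining_set_vertices by blast

lemma scs_lcs_eq_card: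
  assumes "simple_graph V E" and "max_degree V E + 1 < k" and "proper_colouring V E k c"
  shows "scs V E k c = card V" and "lcs V E k c = card V"
proof -
  have "{card S | S. critical_set V E k c S} = {card V}"
    using critical_set_iff_eq_vertices[OF assms] by auto
  then show "scs V E k c = card V" and "lcs V E k c = card V"
    by (simp_all add: scs_def lcs_def)
qed

lemma forced_vertex_determining_set:
  assumes c: "proper_colouring V E k c" and u: "forced_vertex V E k c u"
  shows "determining_set V E k c (V - {u})"
  unfolding determining_set_def
proof (intro conjI notI)
  show "V - {u} \<subseteq> V" by blast
next
  assume "\<exists>c'. proper_colouring V E k c' \<and> (\<exists>v\<in>V. c' v \<noteq> c v) \<and> (\<forall>s\<in>V - {u}. c' s = c s)"
  then obtain c' v where c': "proper_colouring V E k c'" "\<forall>s\<in>V - {u}. c' s = c s"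
    and v: "v \<in> V" "c' v \<noteq> c v" by blast
  have "v = u"
  proof (rule ccontr)
    assume "v \<noteq> u"
    then show False using c'(2) v by simp
  qed
  then have "c' u \<in> {1..k} - {c u}"
    using proper_colouring_in_colours[OF c'(1)] v by simp
  then have "c' u \<in> c ` neighbours V E u" using u unfolding forced_vertex_def by blast
  then obtain x where x: "x \<in> V" "E u x" "c' u = c x" unfolding neighbours_def by blast
  have "x \<noteq> u" using proper_colouring_edge[OF c x(2)] by blast
  then have "c' x = c' u" using c'(2) x by simp
  then show False using proper_colouring_edge[OF c'(1) x(2)] by simp
qed

lemma lcs_less_card:
  assumes fin: "finite V" and c: "proper_colouring V E k c" and u: "forced_vertex V E k c u"
  shows "lcs V E k c < card V"
proof -
  obtain S where S: "critical_set V E k c S" and lcs: "lcs V E k c = card S"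
    using lcs_attained[OF fin] .
  have "S \<noteq> V"
  proof
    assume "S = V"
    moreover have "V - {u} \<subset> V" using u unfolding forced_vertex_def by blast
    ultimately have "\<not> determining_set V E k c (V - {u})"
      using S unfolding critical_set_def by simp
    then show False using forced_vertex_determining_set[OF c u] by contradiction
  qed
  then have "S \<subset> V" using critical_set_subset[OF S] by blast
  then show ?thesis unfolding lcs by (rule psubset_card_mono[OF fin])
qed

lemma recolour_colour_class:
  assumes sg: "simple_graph V E" and c: "proper_colouring V E k c"
    and free: "\<And>x. x \<in> V \<Longrightarrow> c x = a \<Longrightarrow> \<exists>b\<in>{1..k} - {a}. b \<notin> c ` neighbours V E x"
  obtains c' where "proper_colouring V E k c'" and "\<And>x. x \<in> V \<Longrightarrow> c' x \<noteq> a"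
    and "\<And>x. c x \<noteq> a \<Longrightarrow> c' x = c x"
proof -
  obtain g where g: "\<And>x. x \<in> V \<Longrightarrow> c x = a \<Longrightarrow>
      g x \<in> {1..k} - {a} \<and> g x \<notin> c ` neighbours V E x"
    using free by metis
  define c' where "c' x = (if x \<in> V \<and> c x = a then g x else c x)" for x
  \<comment> \<open>The class of a is independent, so a recoloured vertex only sees unchanged neighbours.\<close>
  have recoloured: "c' x \<noteq> c' y" if e: "E x y" and cx: "c x = a" for x y
  proof -
    have "x \<in> V" "y \<in> V" using simple_graph_edgeD[OF sg e] by blast+
    moreover have "c y \<noteq> a" using proper_colouring_edge[OF c e] cx by simp
    moreover have "y \<in> neighbours V E x" using \<open>y \<in> V\<close> e by (simp add: neighbours_def)
    ultimately show ?thesis using g[of x] cx unfolding c'_def by auto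
  qed
  have "proper_colouring V E k c'"
    unfolding proper_colouring_def
  proof (intro conjI ballI allI impI)
    fix x assume "x \<in> V"
    then show "c' x \<in> {1..k}"
      using g proper_colouring_in_colours[OF c] unfolding c'_def by auto
  next
    fix x y assume e: "E x y"
    show "c' x \<noteq> c' y"
    proof (cases "c x = a \<or> c y = a")
      case True
      then show ?thesis using recoloured e simple_graph_edgeD(4)[OF sg e] by metis
    next
      case False
      then show ?thesis using proper_colouring_edge[OF c e] unfolding c'_def by simp
    qed
  qed
  moreover have "c' x \<noteq> a" if "x \<in> V" for x
    using g[OF that] that unfolding c'_def by auto
  moreover have "c' x = c x" if "c x \<noteq> a" for x
    using that unfolding c'_def by simp
  ultimately show ?thesis using that by blast
qed

lemma neighbours_share_colour:
  assumes fin: "finite V" and v: "v \<in> V" and deg: "k \<le> degree V E v + 1"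
    and c: "proper_colouring V E k c"
    and a: "a \<in> {1..k}" "a \<noteq> c v" "a \<notin> c ` neighbours V E v"
  shows "\<exists>w\<in>neighbours V E v. \<exists>w'\<in>neighbours V E v. w \<noteq> w' \<and> c w = c w'"
proof -
  let ?N = "neighbours V E v"
  have cv: "c v \<in> {1..k}" using proper_colouring_in_colours[OF c v] .
  have "c ` ?N \<subseteq> {1..k} - {c v, a}"
    using a(3) proper_colouring_in_colours[OF c] proper_colouring_edge[OF c]
    by (fastforce simp: neighbours_def)
  then have "card (c ` ?N) \<le> card ({1..k} - {c v, a})" by (simp add: card_mono)
  also have "\<dots> = k - 2" using a(1,2) cv by (simp add: card_Diff_subset)
  also have "\<dots> < card ?N"
  proof -
    have "2 \<le> k" using a(1,2) cv by auto
    then show ?thesis using deg by (simp add: degree_eq_card_neighbours)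
  qed
  finally have "\<not> inj_on c ?N" by (rule pigeonhole)
  then show ?thesis unfolding inj_on_def by blast
qed

lemma neighbour_colours_increase:
  assumes sg: "simple_graph V E" and v: "v \<in> V" and deg: "k \<le> degree V E v + 1"
    and c: "proper_colouring V E k c" and unforced: "\<And>u. \<not> forced_vertex V E k c u"
  shows "\<exists>c'. proper_colouring V E k c' \<and> card (c ` neighbours V E v) < card (c' ` neighbours V E v)"
proof -
  let ?N = "neighbours V E v"
  have fin: "finite V" using sg by (simp add: simple_graph_def)
  obtain a where a: "a \<in> {1..k}" "a \<noteq> c v" "a \<notin> c ` ?N"
    using unforced[of v] v unfolding forced_vertex_def by blast
  have "\<exists>b\<in>{1..k} - {a}. b \<notin> c ` neighbours V E x" if "x \<in> V" "c x = a" for x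
    using unforced[of x] that unfolding forced_vertex_def by blast
  then obtain c1 where c1: "proper_colouring V E k c1" "\<And>x. x \<in> V \<Longrightarrow> c1 x \<noteq> a"
    and c1_eq: "\<And>x. c x \<noteq> a \<Longrightarrow> c1 x = c x"
    using recolour_colour_class[OF sg c] by blast
  obtain w w' where w: "w \<in> ?N" "w' \<in> ?N" "w \<noteq> w'" "c w = c w'"
    using neighbours_share_colour[OF fin v deg c a] by blast
  have c_ne_a: "c x \<noteq> a" if "x \<in> ?N" for x using a(3) that by blast
  define c2 where "c2 = c1(w := a)"
  have "proper_colouring V E k c2"
    unfolding c2_def using proper_colouring_fun_upd[OF sg c1(1) a(1)] c1(2)
    by (auto simp: neighbours_def)
  moreover have "insert a (c ` ?N) \<subseteq> c2 ` ?N"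
  proof
    fix b assume "b \<in> insert a (c ` ?N)"
    then consider "b = a" | x where "x \<in> ?N" "b = c x" by blast
    then show "b \<in> c2 ` ?N"
    proof cases
      case 1
      then show ?thesis using w(1) unfolding c2_def by auto
    next
      case 2
      \<comment> \<open>Recolouring w loses no colour, since w' keeps the colour of w.\<close>
      then have "b = c2 (if x = w then w' else x)"
        using w c_ne_a c1_eq unfolding c2_def by auto
      then show ?thesis using 2 w(2) by auto
    qed
  qed
  then have "card (insert a (c ` ?N)) \<le> card (c2 ` ?N)"
    using finite_neighbours[OF fin] by (simp add: card_mono)
  moreover have "card (c ` ?N) < card (insert a (c ` ?N))"
    using a(3) finite_neighbours[OF fin] by simp
  ultimately show ?thesis by (meson order_less_le_trans)
qed

lemma exists_forced_vertex:
  assumes sg: "simple_graph V E" and v: "v \<in> V" and deg: "k \<le> degree V E v + 1"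
    and c0: "proper_colouring V E k c0"
  shows "\<exists>c u. proper_colouring V E k c \<and> forced_vertex V E k c u"
proof (rule ccontr)
  assume none: "\<not> ?thesis"
  let ?N = "neighbours V E v"
  have "finite ?N" using sg by (simp add: simple_graph_def finite_neighbours)
  then have "\<forall>c. proper_colouring V E k c \<longrightarrow> card (c ` ?N) < card ?N + 1"
    using card_image_le by (metis less_Suc_eq_le Suc_eq_plus1)
  then have "\<exists>c. proper_colouring V E k c \<and>
      (\<forall>c'. proper_colouring V E k c' \<longrightarrow> card (c' ` ?N) \<le> card (c ` ?N))"
    by (rule Lattices_Big.ex_has_greatest_nat[where P = "proper_colouring V E k", OF c0])
  then obtain c where c: "proper_colouring V E k c"
    and max: "\<forall>c'. proper_colouring V E k c' \<longrightarrow> card (c' ` ?N) \<le> card (c ` ?N)"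
    by blast
  obtain c' where "proper_colouring V E k c'" "card (c ` ?N) < card (c' ` ?N)"
    using neighbour_colours_increase[OF sg v deg c] none c by blast
  with max show False by (meson leD)
qed

lemma exists_max_degree_vertex:
  assumes "finite V" and "V \<noteq> {}"
  obtains v where "v \<in> V" and "degree V E v = max_degree V E"
proof -
  have "max_degree V E \<in> degree V E ` V"
    unfolding max_degree_def using assms by (intro Max_in) auto
  then show ?thesis using that by auto
qed

lemma sn_lcs_lower_eq_card:
  assumes sg: "simple_graph V E" and large: "max_degree V E + 1 < k"
    and c0: "proper_colouring V E k c0"
  shows "sn V E k = card V" and "lcs_lower V E k = card V"
proof -
  have "{scs V E k c | c. proper_colouring V E k c} = {card V}"
    and "{lcs V E k c | c. proper_colouring V E k c} = {card V}"
    using scs_lcs_eq_card[OF sg large] c0 by (auto intro!: exI[of _ c0])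
  then show "sn V E k = card V" and "lcs_lower V E k = card V"
    by (simp_all add: sn_def lcs_lower_def)
qed

lemma sn_lcs_lower_less_card:
  assumes sg: "simple_graph V E" and "V \<noteq> {}" and small: "k \<le> max_degree V E + 1"
    and c0: "proper_colouring V E k c0"
  shows "sn V E k < card V" and "lcs_lower V E k < card V"
proof -
  have fin: "finite V" using sg by (simp add: simple_graph_def)
  obtain v where v: "v \<in> V" "degree V E v = max_degree V E"
    using exists_max_degree_vertex[OF fin \<open>V \<noteq> {}\<close>] .
  then obtain c u where c: "proper_colouring V E k c" and u: "forced_vertex V E k c u"
    using exists_forced_vertex[OF sg v(1) _ c0] small by auto
  have "lcs V E k c < card V" using lcs_less_card[OF fin c u] .
  then show "sn V E k < card V" and "lcs_lower V E k < card V"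
    using sn_le_scs[OF fin c] lcs_lower_le_lcs[OF fin c] scs_le_lcs[OF fin, of E k c]
    by linarith+
qed

theorem theorem4:
  fixes V :: "'a set" and E :: "'a \<Rightarrow> 'a \<Rightarrow> bool" and k :: nat
  assumes "simple_graph V E"
    and "connected_graph V E"
    and "k \<ge> chromatic_number V E"
  shows "(sn V E k = card V \<longleftrightarrow> k > max_degree V E + 1)
       \<and> (lcs_lower V E k = card V \<longleftrightarrow> k > max_degree V E + 1)"
proof -
  obtain c0 where c0: "proper_colouring V E k c0"
    using exists_proper_colouring[OF assms(1,3)] by blast
  have "V \<noteq> {}" using assms(2) by (simp add: connected_graph_def)
  show ?thesis
  proof (cases "max_degree V E + 1 < k")
    case True
    then show ?thesis using sn_lcs_lower_eq_card[OF assms(1) True c0] by simp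
  next
    case False
    then show ?thesis
      using sn_lcs_lower_less_card[OF assms(1) \<open>V \<noteq> {}\<close> _ c0] by simp
  qed
qed

end
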